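(* Let $1\le n\le L$. A word $w\in\Omega_{L,n}$ with $w_1=\bullet_1$ belongs to $\Omega'^{\{1\}}$ if and only if, for every $i\in\{1,\dots,n\}$, every letter $\Box_i$ in $w$ occurs at a position (in the linear order $1,\dots,L$) to the right of the position of $\bullet_i$.
   Context: Particle labels are taken modulo $n$. $\Omega_{L,n}$ is the set of words $w_1\cdots w_L$ on the ring $\mathbb{Z}/L\mathbb{Z}$ over the alphabet $\{\bullet_1,\dots,\bullet_n,\Box_1,\dots,\Box_n\}$ in which each $\bullet_k$ occurs exactly once, the $\bullet_1,\dots,\bullet_n$ appear in this cyclic order, and the remaining $L-n$ letters are arbitrary $\Box_i$'s. For $w\in\Omega_{L,n}$ let $b_k$ be the position of $\bullet_k$ and $C_k$ the set of positions strictly between $b_k$ and $b_{k+1}$ going cyclically forward ($b_{n+1}=b_1$). For $i,k\in\{1,\dots,n\}$ set $w_\Box(i,k)=p_1\cdots p_{i-1}q_{i+1}\cdots q_kp_{k+1}\cdots p_n$ if $i\le k$ and $w_\Box(i,k)=q_1\cdots q_kp_{k+1}\cdots p_{i-1}q_{i+1}\cdots q_n$ if $k<i$ (empty products are $1$), as monomials in indeterminates $p_1,\dots,p_n,q_1,\dots,q_n$. The weight is the monomial $\mathrm{wt}(w)=\prod_{k=1}^n\prod_{j\in C_k}w_\Box(i_j,k)$ where $w_j=\Box_{i_j}$. For $I\subseteq\{1,\dots,n\}$, $\Omega^I_{L,n}$ is the set of $w\in\Omega_{L,n}$ with $\mathrm{wt}(w)\neq0$ when $q_k=0$ for $k\in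 I$ and all other rates are positive (equivalently, the monomial $\mathrm{wt}(w)$ contains no $q_k$ with $k\in I$), and $\Omega'^{I}$ is the set of $w\in\Omega^I_{L,n}$ with $w_1=\bullet_1$. *)

theory Defs
  imports Main "HOL-Library.Multiset"
begin

text \<open>Letters: Bullet k is the particle of class k, Box i is the vacancy of class i.
Words of length L are lists; list index j (0-based) is the paper's position j+1.\<close>

datatype letter = Bullet nat | Box nat

fun is_bullet :: "letter \<Rightarrow> bool" where
  "is_bullet (Bullet _) = True" | "is_bullet (Box _) = False"

fun label :: "letter \<Rightarrow> nat" where
  "label (Bullet k) = k" | "label (Box i) = i"

definition Omega :: "nat \<Rightarrow> nat \<Rightarrow> letter list set" where
  "Omega L n = {w. length w = L \<and> (\<forall>x\<in>set w. label x \<in> {1..n})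
      \<and> (\<exists>r. filter is_bullet w = rotate r (map Bullet [1..<n+1]))}"

definition bpos :: "letter list \<Rightarrow> nat \<Rightarrow> nat" where
  "bpos w k = (THE j. j < length w \<and> w ! j = Bullet k)"

text \<open>Forward cyclic distance from a to c on Z/LZ, taking values in 1..L (L when c = a).\<close>
definition cdist :: "nat \<Rightarrow> nat \<Rightarrow> nat \<Rightarrow> nat" where
  "cdist L a c = ((c + L - a - 1) mod L) + 1"

text \<open>C_k: positions strictly between b_k and b_{k+1} going cyclically forward, b_{n+1} = b_1.\<close>
definition Cset :: "nat \<Rightarrow> letter list \<Rightarrow> nat \<Rightarrow> nat set" where
  "Cset n w k = (let L = length w; a = bpos w k; c = bpos w (if k = n then 1 else k + 1)
      in {j. j < L \<and> 0 < (j + L - a) mod L \<and> (j + L - a) mod L < cdist L a c})"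

text \<open>Indeterminates p_1..p_n, q_1..q_n; monomials are multisets of indeterminates
(product of monomials = sum of multisets).\<close>
datatype var = P nat | Q nat

definition wBox :: "nat \<Rightarrow> nat \<Rightarrow> nat \<Rightarrow> var multiset" where
  "wBox n i k = (if i \<le> k
     then mset (map P [1..<i]) + mset (map Q [i+1..<k+1]) + mset (map P [k+1..<n+1])
     else mset (map Q [1..<k+1]) + mset (map P [k+1..<i]) + mset (map Q [i+1..<n+1]))"

definition wt :: "nat \<Rightarrow> letter list \<Rightarrow> var multiset" where
  "wt n w = (\<Sum>k\<in>{1..n}. \<Sum>j\<in>Cset n w k. wBox n (label (w ! j)) k)"

definition OmegaI :: "nat \<Rightarrow> nat \<Rightarrow> nat set \<Rightarrow> letter list set" where
  "OmegaI L n I = {w \<in> Omega L n. \<forall>k\<in>I. Q k \<notin># wt n w}"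

definition OmegaI' :: "nat \<Rightarrow> nat \<Rightarrow> nat set \<Rightarrow> letter list set" where
  "OmegaI' L n I = {w \<in> OmegaI L n I. w ! 0 = Bullet 1}"

end

theory Submission
  imports Defs
begin

text \<open>Since \<open>w\<close> starts with \<open>Bullet 1\<close>, its bullets occur in the linear order \<open>1, \<dots>, n\<close>, so
  the bullet preceding a position \<open>j\<close> is the one numbered by the count of bullets before \<open>j\<close>.
  Hence \<open>C\<^sub>k\<close> consists exactly of the boxes preceded by \<open>k\<close> bullets, and \<open>q\<^sub>1\<close> divides
  \<open>w\<^sub>\<box>(i, k)\<close> precisely when \<open>k < i\<close>. So the weight avoids \<open>q\<^sub>1\<close> iff every box \<open>Box i\<close> is
  preceded by at least \<open>i\<close> bullets, i.e. lies to the right of \<open>Bullet i\<close>.\<close>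

lemma rotate_eq_self_if_hd_eq:
  assumes "distinct xs" "xs \<noteq> []" "hd (rotate r xs) = hd xs"
  shows "rotate r xs = xs"
proof -
  have "xs ! (r mod length xs) = xs ! 0"
    using assms(3) hd_rotate_conv_nth[OF assms(2), of r] hd_conv_nth[OF assms(2)] by simp
  then have "r mod length xs = 0"
    using assms(1,2) by (simp add: nth_eq_iff_index_eq)
  then show ?thesis
    by (metis rotate_conv_mod rotate0 id_apply)
qed

lemma Omega_filter_bullets:
  assumes "w \<in> Omega L n" "1 \<le> n" "w ! 0 = Bullet 1"
  shows "filter is_bullet w = map Bullet [1..<n+1]"
proof -
  obtain r where r: "filter is_bullet w = rotate r (map Bullet [1..<n+1])"
    using assms(1) by (auto simp: Omega_def)
  have "w \<noteq> []"
  proof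
    assume "w = []"
    then have "rotate r (map Bullet [1..<n+1]) = []"
      using r by simp
    then show False
      using assms(2) by simp
  qed
  then have "hd (filter is_bullet w) = Bullet 1"
    using assms(3) by (cases w) auto
  then have "hd (rotate r (map Bullet [1..<n+1])) = hd (map Bullet [1..<n+1])"
    using r assms(2) by (simp add: hd_map del: upt_Suc)
  then have "rotate r (map Bullet [1..<n+1]) = map Bullet [1..<n+1]"
    by (rule rotate_eq_self_if_hd_eq[rotated 2])
      (use assms(2) in \<open>simp_all add: distinct_map inj_on_def del: upt_Suc\<close>)
  with r show ?thesis
    by simp
qed

lemma Q_in_wBox:
  "Q m \<in># wBox n i k \<longleftrightarrow>
    (if i \<le> k then i < m \<and> m \<le> k else (1 \<le> m \<and> m \<le> k) \<or> (i < m \<and> m \<le> n))"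
  unfolding wBox_def by auto

lemma Q_in_wt:
  "Q m \<in># wt n w \<longleftrightarrow> (\<exists>k\<in>{1..n}. \<exists>j\<in>Cset n w k. Q m \<in># wBox n (label (w ! j)) k)"
proof -
  have "finite (Cset n w k)" for k
    unfolding Cset_def Let_def by simp
  then show ?thesis
    unfolding wt_def by (simp add: set_mset_sum)
qed

lemma cyclic_between_iff:
  assumes "a < L" "c < L" "a < c \<or> c = 0" "j < L"
  shows "0 < (j + L - a) mod L \<and> (j + L - a) mod L < cdist L a c \<longleftrightarrow> a < j \<and> (c = 0 \<or> j < c)"
proof (cases "a \<le> j")
  case True
  then have "(j + L - a) mod L = j - a"
    using assms(4) by (metis Nat.add_diff_assoc2 mod_add_self2 mod_less less_imp_diff_less)
  moreover have "cdist L a c = (if c = 0 then L - a else c - a)"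
    using assms(1-3) by (auto simp: cdist_def mod_if)
  ultimately show ?thesis
    using True assms by auto
next
  case False
  then show ?thesis
    using assms by (auto simp: cdist_def mod_if)
qed

lemma not_is_bullet_iff: "\<not> is_bullet x \<longleftrightarrow> (\<exists>i. x = Box i)"
  by (cases x) auto

definition bullets_before :: "letter list \<Rightarrow> nat \<Rightarrow> nat" where
  "bullets_before w j = length (filter is_bullet (take j w))"

locale ordered_bullets =
  fixes n :: nat and w :: "letter list"
  assumes filter_bullets: "filter is_bullet w = map Bullet [1..<n+1]"
begin

lemma bullets_before_Suc:
  "j < length w \<Longrightarrow>
    bullets_before w (Suc j) = bullets_before w j + (if is_bullet (w ! j) then 1 else 0)"
  by (simp add: bullets_before_def take_Suc_conv_app_nth)

lemma bullets_before_mono: "j \<le> j' \<Longrightarrow> bullets_before w j \<le> bullets_before w j'"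
  unfolding bullets_before_def by (metis le_add_diff_inverse take_add filter_append length_append le_add1)

lemma bullets_before_strict_mono:
  "j < j' \<Longrightarrow> j < length w \<Longrightarrow> is_bullet (w ! j) \<Longrightarrow> bullets_before w j < bullets_before w j'"
  using bullets_before_Suc[of j] bullets_before_mono[of "Suc j" j'] by simp

lemma bullets_before_le: "bullets_before w j \<le> n"
proof -
  have "bullets_before w j \<le> bullets_before w (max j (length w))"
    by (rule bullets_before_mono) simp
  also have "\<dots> = n"
    using filter_bullets by (simp add: bullets_before_def)
  finally show ?thesis .
qed

lemma nth_bullet:
  assumes "j < length w" "is_bullet (w ! j)"
  shows "w ! j = Bullet (bullets_before w j + 1)" "bullets_before w j < n"
proof -
  have "w = take j w @ w ! j # drop (Suc j) w"
    using assms(1) by (simp add: id_take_nth_drop)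
  then have split: "filter is_bullet w =
      filter is_bullet (take j w) @ w ! j # filter is_bullet (drop (Suc j) w)"
    using assms(2) by (metis filter.simps(2) filter_append)
  then have "filter is_bullet w ! bullets_before w j = w ! j"
    by (simp add: bullets_before_def nth_append)
  moreover have "bullets_before w j < length (filter is_bullet w)"
    using split by (simp add: bullets_before_def)
  ultimately show "w ! j = Bullet (bullets_before w j + 1)" "bullets_before w j < n"
    using filter_bullets by (simp_all add: nth_upt del: upt_Suc)
qed

lemma bpos_eqI:
  assumes "j < length w" "w ! j = Bullet k"
  shows "bpos w k = j"
  unfolding bpos_def
proof (rule the_equality)
  fix j' assume j': "j' < length w \<and> w ! j' = Bullet k"
  then have "bullets_before w j' = bullets_before w j"
    using assms nth_bullet(1)[of j] nth_bullet(1)[of j'] by simp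
  then show "j' = j"
    using assms j' bullets_before_strict_mono[of j j'] bullets_before_strict_mono[of j' j]
    by (cases j j' rule: linorder_cases) simp_all
qed (use assms in simp)

lemma bpos_bullet:
  assumes "k \<in> {1..n}"
  shows "bpos w k < length w" "w ! bpos w k = Bullet k"
proof -
  have "Bullet k \<in> set (filter is_bullet w)"
    using filter_bullets assms by auto
  then have "Bullet k \<in> set w"
    by simp
  then obtain j where "j < length w" "w ! j = Bullet k"
    by (metis in_set_conv_nth)
  then show "bpos w k < length w" "w ! bpos w k = Bullet k"
    using bpos_eqI by simp_all
qed

lemma bullets_before_bpos: "k \<in> {1..n} \<Longrightarrow> bullets_before w (bpos w k) = k - 1"
  using bpos_bullet[of k] nth_bullet[of "bpos w k"] by auto

lemma bpos_less_iff: "k \<in> {1..n} \<Longrightarrow> bpos w k < j \<longleftrightarrow> k \<le> bullets_before w j"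
  using bpos_bullet[of k] bullets_before_bpos[of k] bullets_before_Suc[of "bpos w k"]
    bullets_before_mono[of "Suc (bpos w k)" j] bullets_before_mono[of j "bpos w k"]
  by (cases "bpos w k < j") auto

lemma bpos_strict_mono: "k \<in> {1..n} \<Longrightarrow> k' \<in> {1..n} \<Longrightarrow> k < k' \<Longrightarrow> bpos w k < bpos w k'"
  using bpos_less_iff[of k "bpos w k'"] bullets_before_bpos[of k'] by simp

lemma Cset_eq:
  assumes "w ! 0 = Bullet 1" "k \<in> {1..n}"
  shows "Cset n w k = {j. j < length w \<and> bpos w k < j \<and> (k < n \<longrightarrow> j < bpos w (k + 1))}"
proof -
  define a c where "a = bpos w k" and "c = bpos w (if k = n then 1 else k + 1)"
  have "a < length w"
    using bpos_bullet(1)[OF assms(2)] by (simp add: a_def)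
  moreover have "c < length w"
    using bpos_bullet(1)[of "k + 1"] bpos_bullet(1)[of 1] assms(2) by (simp add: c_def)
  moreover have "k = n \<Longrightarrow> c = 0"
    using bpos_eqI[of 0 1] assms(1) \<open>a < length w\<close> by (simp add: c_def del: length_greater_0_conv)
  moreover have "k < n \<Longrightarrow> a < c"
    using bpos_strict_mono[of k "k + 1"] assms(2) by (simp add: a_def c_def)
  ultimately have "j \<in> Cset n w k \<longleftrightarrow> j < length w \<and> a < j \<and> (k < n \<longrightarrow> j < bpos w (k + 1))" for j
    unfolding Cset_def Let_def a_def[symmetric] c_def[symmetric]
    using cyclic_between_iff[of a "length w" c j] assms(2) by (cases "k < n") (auto simp: c_def)
  then show ?thesis
    by (auto simp: a_def)
qed

lemma Cset_eq_boxes: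
  assumes "w ! 0 = Bullet 1" "k \<in> {1..n}"
  shows "Cset n w k = {j. j < length w \<and> \<not> is_bullet (w ! j) \<and> bullets_before w j = k}"
proof -
  have "bpos w k < j \<and> (k < n \<longrightarrow> j < bpos w (k + 1)) \<longleftrightarrow>
      \<not> is_bullet (w ! j) \<and> bullets_before w j = k" if j: "j < length w" for j
  proof
    assume between: "bpos w k < j \<and> (k < n \<longrightarrow> j < bpos w (k + 1))"
    have "k \<le> bullets_before w j"
      using between bpos_less_iff[of k j] assms(2) by simp
    moreover have "bullets_before w j \<le> k"
    proof (cases "k < n")
      case True
      then show ?thesis
        using between bpos_less_iff[of "k + 1" j] assms(2) by simp
    qed (use bullets_before_le[of j] assms(2) in simp)
    ultimately have count: "bullets_before w j = k"
      by simp
      moreover have "\<not> is_bullet (w ! j)"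
    proof
      assume "is_bullet (w ! j)"
      then have "w ! j = Bullet (k + 1)" "k < n"
        using nth_bullet[OF j] count by simp_all
      then show False
        using bpos_eqI[OF j] between by simp
    qed
    ultimately show "\<not> is_bullet (w ! j) \<and> bullets_before w j = k"
      by simp
  next
    assume box: "\<not> is_bullet (w ! j) \<and> bullets_before w j = k"
    then have "k < n \<Longrightarrow> \<not> bpos w (k + 1) < j \<and> bpos w (k + 1) \<noteq> j"
      using bpos_less_iff[of "k + 1" j] bpos_bullet(2)[of "k + 1"] assms(2) by auto
    then show "bpos w k < j \<and> (k < n \<longrightarrow> j < bpos w (k + 1))"
      using box bpos_less_iff[of k j] assms(2) by auto
  qed
  then show ?thesis
    unfolding Cset_eq[OF assms] by blast
qed

lemma Q1_notin_wt_iff: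
  assumes "w ! 0 = Bullet 1" "\<forall>x\<in>set w. label x \<in> {1..n}"
  shows "Q 1 \<notin># wt n w \<longleftrightarrow> (\<forall>i\<in>{1..n}. \<forall>j<length w. w ! j = Box i \<longrightarrow> bpos w i < j)"
proof -
  have box_label: "i \<in> {1..n}" if "j < length w" "w ! j = Box i" for i j
    using bspec[OF assms(2) nth_mem[OF that(1)]] that(2) by simp
  have "1 \<le> bullets_before w j" if "j < length w" "\<not> is_bullet (w ! j)" for j
  proof -
    have "0 < j"
      using that assms(1) by (cases j) auto
    moreover have "w \<noteq> []"
      using that(1) by auto
    ultimately show ?thesis
      using bullets_before_Suc[of 0] bullets_before_mono[of 1 j] assms(1)
      by (simp add: bullets_before_def)
  qed
  then have "(\<exists>k\<in>{1..n}. \<exists>j<length w. \<not> is_bullet (w ! j) \<and> bullets_before w j = k \<and> k < label (w ! j))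
      \<longleftrightarrow> (\<exists>j<length w. \<not> is_bullet (w ! j) \<and> bullets_before w j < label (w ! j))"
    using bullets_before_le by fastforce
  moreover have "Q 1 \<in># wBox n (label (w ! j)) k \<longleftrightarrow> k < label (w ! j)"
    if "j < length w" "k \<in> {1..n}" for j k
  proof -
    have "label (w ! j) \<in> {1..n}"
      using assms(2) that(1) by simp
    then show ?thesis
      using that(2) by (auto simp: Q_in_wBox)
  qed
  ultimately have "Q 1 \<in># wt n w \<longleftrightarrow>
      (\<exists>j<length w. \<not> is_bullet (w ! j) \<and> bullets_before w j < label (w ! j))"
    unfolding Q_in_wt by (simp add: Cset_eq_boxes[OF assms(1)])
  also have "\<dots> \<longleftrightarrow> (\<exists>j<length w. \<exists>i. w ! j = Box i \<and> bullets_before w j < i)"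
    by (auto simp: not_is_bullet_iff)
  also have "\<dots> \<longleftrightarrow> (\<exists>j<length w. \<exists>i. w ! j = Box i \<and> \<not> bpos w i < j)"
    using bpos_less_iff box_label by (metis not_le)
  finally show ?thesis
    using box_label by blast
qed

end

theorem proposition5p3:
  fixes L n :: nat and w :: "letter list"
  assumes "1 \<le> n" and "n \<le> L"
    and "w \<in> Omega L n" and "w ! 0 = Bullet 1"
  shows "w \<in> OmegaI' L n {1} \<longleftrightarrow>
    (\<forall>i\<in>{1..n}. \<forall>j<L. w ! j = Box i \<longrightarrow> bpos w i < j)"
proof -
  have "length w = L" and labels: "\<forall>x\<in>set w. label x \<in> {1..n}"
    using assms(3) by (simp_all add: Omega_def)
  interpret ordered_bullets n w
    using Omega_filter_bullets assms(1,3,4) by unfold_locales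
  have "w \<in> OmegaI' L n {1} \<longleftrightarrow> Q 1 \<notin># wt n w"
    using assms(3,4) by (simp add: OmegaI'_def OmegaI_def)
  with Q1_notin_wt_iff[OF assms(4) labels] \<open>length w = L\<close> show ?thesis
    by simp
qed

end
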